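(* Let $1<p<\infty$, $1/p+1/p'=1$, and let $f=\sum_{k\ge0}c_kh_{2^k}\in L^p$ be a first-order Haar chaos with $c_0\ne0$. Let $\{d_k\}$ be the Taylor coefficients of $\hat g(z)=1/\hat f(z)$ (as a formal power series), and define $g^n$ as follows: for $n\ge1$, with $m=\lfloor\log_2n\rfloor$ and $\nu(n)$ the largest integer with $2^{\nu(n)}\mid n$, $g^n=\sum_{j=0}^{\nu(n)}d_j2^{m-j}h_{n/2^j}$. Then $\hat g\in A_{p'}^+(\mathbb D_{2^{-1/p}})$ if and only if $\sup_{n\ge1}\|f_n\|_{L^p}\|g^n\|_{L^{p'}}<\infty$.
   Context: All functions are complex-valued on $I=(0,1]$. Let $h=\chi_{(0,1/2]}-\chi_{(1/2,1]}$; for $n=2^k+j$ with $k\ge0$, $0\le j\le2^k-1$, $h_n(t)=h(2^kt-j)$ on $(j2^{-k},(j+1)2^{-k}]$ and $0$ otherwise. For mean-zero $f$, the system of dilations and translations is $f_n(t)=f(2^kt-j)$ on $(j2^{-k},(j+1)2^{-k}]$, $0$ otherwise. A first-order Haar chaos is $f=\sum_{k\ge0}c_kh_{2^k}$, $c_k\in\mathbb C$; its symbol is $\hat f(z)=\sum_kc_kz^k$. $A_q^+(\mathbb D_R)$ is the space of power series $u(z)=\sum a_kz^k$ with $\|(a_kR^k)_k\|_{\ell^q}<\infty$. (The system $\{g^n\}$ is biorthogonal to $\{f_n\}$.) *)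

theory Defs
  imports "HOL-Analysis.Analysis" "HOL-Computational_Algebra.Formal_Power_Series"
begin

text \<open>Dyadic indexing: for n = 2^k + j with 0 \<le> j < 2^k, level n = k and pos n = j.\<close>
definition level :: "nat \<Rightarrow> nat" where
  "level n = (GREATEST k::nat. 2 ^ k \<le> n)"

definition pos :: "nat \<Rightarrow> nat" where
  "pos n = n - 2 ^ level n"

definition nu :: "nat \<Rightarrow> nat" where
  "nu n = (GREATEST k::nat. 2 ^ k dvd n)"

definition dil :: "(real \<Rightarrow> complex) \<Rightarrow> nat \<Rightarrow> real \<Rightarrow> complex" where
  "dil u n t = (if real (pos n) / 2 ^ level n < t \<and> t \<le> (real (pos n) + 1) / 2 ^ level n
                then u (2 ^ level n * t - real (pos n)) else 0)"

definition haar :: "real \<Rightarrow> complex" where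
  "haar t = (if 0 < t \<and> t \<le> 1/2 then 1 else if 1/2 < t \<and> t \<le> 1 then -1 else 0)"

definition haar_fn :: "nat \<Rightarrow> real \<Rightarrow> complex" where
  "haar_fn n = dil haar n"

text \<open>First-order Haar chaos f = sum_k c_k h_{2^k}; for each t > 0 only finitely many terms are nonzero.\<close>
definition chaos :: "(nat \<Rightarrow> complex) \<Rightarrow> real \<Rightarrow> complex" where
  "chaos c t = (\<Sum>k. c k * haar_fn (2 ^ k) t)"

definition symbol :: "(nat \<Rightarrow> complex) \<Rightarrow> complex fps" where
  "symbol c = Abs_fps c"

definition inv_coeffs :: "(nat \<Rightarrow> complex) \<Rightarrow> nat \<Rightarrow> complex" where
  "inv_coeffs c k = fps_nth (inverse (symbol c)) k"

definition gdual :: "(nat \<Rightarrow> complex) \<Rightarrow> nat \<Rightarrow> real \<Rightarrow> complex" where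
  "gdual c n t = (\<Sum>j=0..nu n. inv_coeffs c j * 2 ^ (level n - j) * haar_fn (n div 2 ^ j) t)"

definition Lpnorm :: "real \<Rightarrow> (real \<Rightarrow> complex) \<Rightarrow> real" where
  "Lpnorm p u = (set_lebesgue_integral lborel {0<..1::real} (\<lambda>t. norm (u t) powr p)) powr (1 / p)"

text \<open>Membership of a power series sum a_k z^k in A_q^+(D_R).\<close>
definition A_plus :: "real \<Rightarrow> real \<Rightarrow> (nat \<Rightarrow> complex) \<Rightarrow> bool" where
  "A_plus q R a \<longleftrightarrow> summable (\<lambda>k. norm (a k * of_real (R ^ k)) powr q)"

end

theory Submission
  imports Defs
begin

text \<open>Substituting t = (pos n + s) / 2^level n turns f_n into f and g^n into 2^level n times
  the profile s \<mapsto> \<Sum>j\<le>\<nu>(n). a_j h(s/2^j) with a_j = d_j / 2^j. The profile is constant on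
  (0,1/2] and on each dyadic block (2^k/2, 2^k], so ||f_n||_p ||g^n||_p' = ||f||_p E(\<nu>(n))^(1/p')
  for an explicit sum E(N) over these blocks, and since \<nu>(2^N) = N the products are bounded iff
  E is. Finally E(N) is comparable to \<Sum>k\<le>N. 2^k |a_k|^p' = \<Sum>k\<le>N. |d_k 2^(-k/p)|^p': one
  direction bounds the block values by geometric convolutions of the |a_j|, the other inverts
  the recursion T_k = a_k + T_(k+1) for the tail sums T_k; both are closed by Schur's test for
  a geometric kernel.\<close>

lemma powr_weighted_sum_le:
  fixes w y :: "'a \<Rightarrow> real"
  assumes S: "finite S" and w: "\<And>i. i \<in> S \<Longrightarrow> w i \<ge> 0"
    and y: "\<And>i. i \<in> S \<Longrightarrow> y i \<ge> 0" and q: "q \<ge> 1"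
  shows "(\<Sum>i\<in>S. w i * y i) powr q \<le> (\<Sum>i\<in>S. w i) powr (q - 1) * (\<Sum>i\<in>S. w i * y i powr q)"
proof -
  define S' where "S' = {i\<in>S. w i > 0 \<and> y i > 0}"
  have S'S: "S' \<subseteq> S" and fS': "finite S'" using S by (auto simp: S'_def)
  have sum_S': "(\<Sum>i\<in>S. w i * y i) = (\<Sum>i\<in>S'. w i * y i)"
    by (rule sum.mono_neutral_right[OF S S'S]) (use w y in \<open>force simp: S'_def\<close>)
  show ?thesis
  proof (cases "S' = {}")
    case True
    then show ?thesis using sum_S' w by (simp add: sum_nonneg)
  next
    case False
    define L where "L = (\<Sum>i\<in>S'. w i)"
    have L: "L > 0" unfolding L_def using False fS' by (intro sum_pos) (auto simp: S'_def)
    have "(\<lambda>x. x powr q) (\<Sum>i\<in>S'. (w i / L) *\<^sub>R y i) \<le> (\<Sum>i\<in>S'. (w i / L) * (\<lambda>x. x powr q) (y i))"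
      using L by (intro convex_on_sum[OF fS' False powr_convex[OF q]])
        (auto simp: S'_def L_def sum_divide_distrib[symmetric])
    then have "(\<Sum>i\<in>S'. w i * y i) powr q / L powr q \<le> (\<Sum>i\<in>S'. w i * y i powr q) / L"
      using L by (simp add: sum_divide_distrib[symmetric] powr_divide sum_nonneg S'_def less_imp_le)
    then have "(\<Sum>i\<in>S'. w i * y i) powr q \<le> L powr (q - 1) * (\<Sum>i\<in>S'. w i * y i powr q)"
      using L by (simp add: divide_simps powr_diff mult.commute)
    also have "\<dots> \<le> (\<Sum>i\<in>S. w i) powr (q - 1) * (\<Sum>i\<in>S. w i * y i powr q)"
      using L q w y S'S unfolding L_def
      by (intro mult_mono powr_mono2 sum_mono2[OF S S'S] sum_nonneg) (auto simp: subset_iff)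
    finally show ?thesis using sum_S' by simp
  qed
qed

lemma schur_test_powr:
  fixes K :: "'a \<Rightarrow> 'a \<Rightarrow> real"
  assumes A: "finite A" and q: "q \<ge> 1" and S: "S \<ge> 0" and K: "\<And>k i. K k i \<ge> 0"
    and x: "\<And>i. x i \<ge> 0"
    and row: "\<And>k. k \<in> A \<Longrightarrow> (\<Sum>i\<in>A. K k i) \<le> S"
    and col: "\<And>i. i \<in> A \<Longrightarrow> (\<Sum>k\<in>A. K k i) \<le> S"
  shows "(\<Sum>k\<in>A. (\<Sum>i\<in>A. K k i * x i) powr q) \<le> S powr q * (\<Sum>i\<in>A. x i powr q)"
proof -
  have "(\<Sum>k\<in>A. (\<Sum>i\<in>A. K k i * x i) powr q) \<le> (\<Sum>k\<in>A. S powr (q - 1) * (\<Sum>i\<in>A. K k i * x i powr q))"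
  proof (rule sum_mono)
    fix k assume k: "k \<in> A"
    have "(\<Sum>i\<in>A. K k i * x i) powr q \<le> (\<Sum>i\<in>A. K k i) powr (q - 1) * (\<Sum>i\<in>A. K k i * x i powr q)"
      by (rule powr_weighted_sum_le[OF A K x q])
    also have "\<dots> \<le> S powr (q - 1) * (\<Sum>i\<in>A. K k i * x i powr q)"
      using row[OF k] q K by (intro mult_right_mono powr_mono2 sum_nonneg) auto
    finally show "(\<Sum>i\<in>A. K k i * x i) powr q \<le> S powr (q - 1) * (\<Sum>i\<in>A. K k i * x i powr q)" .
  qed
  also have "\<dots> = S powr (q - 1) * (\<Sum>i\<in>A. \<Sum>k\<in>A. K k i * x i powr q)"
    by (simp only: sum_distrib_left[symmetric], rule arg_cong[where f="(*) _"], rule sum.swap)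
  also have "\<dots> = S powr (q - 1) * (\<Sum>i\<in>A. x i powr q * (\<Sum>k\<in>A. K k i))"
    by (simp add: sum_distrib_left mult.commute)
  also have "\<dots> \<le> S powr (q - 1) * (\<Sum>i\<in>A. x i powr q * S)"
    by (intro mult_left_mono sum_mono) (auto simp: col)
  also have "\<dots> = S powr q * (\<Sum>i\<in>A. x i powr q)"
    using S by (cases "S = 0") (simp_all add: powr_diff sum_distrib_left sum_distrib_right mult_ac)
  finally show ?thesis .
qed

lemma sum_power_inj_le:
  fixes r :: real
  assumes "finite A" "inj_on g A" "0 \<le> r" "r < 1"
  shows "(\<Sum>i\<in>A. r ^ g i) \<le> 1 / (1 - r)"
proof -
  have "(\<Sum>i\<in>A. r ^ g i) = (\<Sum>l\<in>g ` A. r ^ l)" using assms by (simp add: sum.reindex)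
  also have "\<dots> \<le> (\<Sum>l. r ^ l)"
    using assms by (intro sum_le_suminf summable_geometric) auto
  also have "\<dots> = 1 / (1 - r)" using assms by (simp add: suminf_geometric)
  finally show ?thesis .
qed

definition geom_kernel :: "real \<Rightarrow> nat \<Rightarrow> nat \<Rightarrow> real" where
  "geom_kernel r k i = (if i \<le> k then r ^ (k - i) else 0)"

lemma geom_kernel_nonneg: "0 \<le> r \<Longrightarrow> 0 \<le> geom_kernel r k i"
  by (simp add: geom_kernel_def)

lemma sum_geom_kernel_row_le:
  "0 \<le> r \<Longrightarrow> r < 1 \<Longrightarrow> (\<Sum>i\<le>N. geom_kernel r k i) \<le> 1 / (1 - r)"
  unfolding geom_kernel_def
  by (subst sum.inter_filter[symmetric], simp, rule sum_power_inj_le) (auto simp: inj_on_def)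

lemma sum_geom_kernel_col_le:
  "0 \<le> r \<Longrightarrow> r < 1 \<Longrightarrow> (\<Sum>k\<le>N. geom_kernel r k i) \<le> 1 / (1 - r)"
  unfolding geom_kernel_def
  by (subst sum.inter_filter[symmetric], simp, rule sum_power_inj_le) (auto simp: inj_on_def)

lemma sum_geom_kernel_eq:
  "k \<le> N \<Longrightarrow> (\<Sum>i\<le>N. geom_kernel r k i * x i) = (\<Sum>i\<le>k. r ^ (k - i) * x i)"
  unfolding geom_kernel_def
  by (subst sum.mono_neutral_right[of "{..N}" "{..k}"]) auto

lemma sum_geom_kernel_transpose_eq:
  "(\<Sum>i\<le>N. geom_kernel r i k * x i) = (\<Sum>i=k..N. r ^ (i - k) * x i)"
  unfolding geom_kernel_def
  by (subst sum.mono_neutral_right[of "{..N}" "{k..N}"]) auto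

lemma geom_kernel_powr_le:
  assumes "0 \<le> r" "r < 1" "q \<ge> 1" "\<And>i. x i \<ge> 0"
  shows "(\<Sum>k\<le>N. (\<Sum>i\<le>N. geom_kernel r k i * x i) powr q) \<le> (1 / (1 - r)) powr q * (\<Sum>i\<le>N. x i powr q)"
  using assms sum_geom_kernel_row_le sum_geom_kernel_col_le
  by (intro schur_test_powr) (auto simp: geom_kernel_nonneg)

lemma geom_kernel_transpose_powr_le:
  assumes "0 \<le> r" "r < 1" "q \<ge> 1" "\<And>i. x i \<ge> 0"
  shows "(\<Sum>k\<le>N. (\<Sum>i\<le>N. geom_kernel r i k * x i) powr q) \<le> (1 / (1 - r)) powr q * (\<Sum>i\<le>N. x i powr q)"
  using assms sum_geom_kernel_row_le sum_geom_kernel_col_le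
  by (intro schur_test_powr) (auto simp: geom_kernel_nonneg)

lemma powr_add_le:
  fixes a b q :: real
  assumes "0 \<le> a" "0 \<le> b" "0 \<le> q"
  shows "(a + b) powr q \<le> 2 powr q * (a powr q + b powr q)"
proof -
  have "(a + b) powr q \<le> (2 * max a b) powr q" using assms by (intro powr_mono2) auto
  also have "\<dots> = 2 powr q * max a b powr q" using assms by (simp add: powr_mult)
  also have "\<dots> \<le> 2 powr q * (a powr q + b powr q)" by (intro mult_left_mono) (auto simp: max_def)
  finally show ?thesis .
qed

lemma sum_powr_add_at_zero_le:
  fixes w :: "nat \<Rightarrow> real"
  assumes w: "\<And>i. 0 \<le> w i" and c: "0 \<le> c" and q: "0 \<le> q"
  shows "(\<Sum>i\<le>N. (w i + (if i = 0 then c else 0)) powr q) \<le> 2 powr q * ((\<Sum>i\<le>N. w i powr q) + c powr q)"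
proof -
  have "(w i + (if i = 0 then c else 0)) powr q \<le> 2 powr q * (w i powr q + (if i = 0 then c powr q else 0))" for i
  proof (cases "i = 0")
    case True
    then show ?thesis using powr_add_le[of "w 0" c q] w c q by simp
  next
    case False
    have "1 * w i powr q \<le> 2 powr q * w i powr q"
      using q by (intro mult_right_mono ge_one_powr_ge_zero) auto
    then show ?thesis using False by simp
  qed
  then have "(\<Sum>i\<le>N. (w i + (if i = 0 then c else 0)) powr q)
      \<le> (\<Sum>i\<le>N. 2 powr q * (w i powr q + (if i = 0 then c powr q else 0)))"
    by (intro sum_mono)
  then show ?thesis by (simp add: sum_distrib_left[symmetric] sum.distrib)
qed

lemma power_two_powr_inverse_powr:
  fixes q :: real
  assumes "q \<noteq> 0"
  shows "((2 powr (-1 / q)) ^ k) powr q = 1 / 2 ^ k"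
proof -
  have "((2 powr (-1 / q)) ^ k) powr q = 2 powr (real k * (-1 / q) * q)"
    by (simp add: powr_power powr_powr)
  also have "\<dots> = 1 / 2 ^ k"
    using assms by (simp add: powr_minus_divide powr_realpow)
  finally show ?thesis .
qed

definition tail_sum :: "(nat \<Rightarrow> complex) \<Rightarrow> nat \<Rightarrow> nat \<Rightarrow> complex" where
  "tail_sum a N k = (\<Sum>j=k..N. a j)"

text \<open>The integral of |s \<mapsto> \<Sum>j\<le>N. a j * h(s/2^j)|^q, a function equal to tail_sum a N 0 on
  (0,1/2], to tail_sum a N (k+1) - a k on (2^k/2, 2^k] for k \<le> N, and to 0 elsewhere.\<close>
definition haar_energy :: "real \<Rightarrow> (nat \<Rightarrow> complex) \<Rightarrow> nat \<Rightarrow> real" where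
  "haar_energy q a N = norm (tail_sum a N 0) powr q / 2
     + (\<Sum>k\<le>N. 2 ^ k / 2 * norm (tail_sum a N (Suc k) - a k) powr q)"

lemma haar_energy_nonneg: "0 \<le> haar_energy q a N"
  unfolding haar_energy_def by (intro add_nonneg_nonneg sum_nonneg) auto

lemma tail_sum_eq_Suc: "k \<le> N \<Longrightarrow> tail_sum a N k = a k + tail_sum a N (Suc k)"
  unfolding tail_sum_def by (subst sum.atLeast_Suc_atMost) auto

lemma norm_tail_sum_diff_le:
  assumes "k \<le> N"
  shows "norm (tail_sum a N (Suc k) - a k) \<le> (\<Sum>j=k..N. norm (a j))"
proof -
  have "norm (tail_sum a N (Suc k) - a k) \<le> norm (tail_sum a N (Suc k)) + norm (a k)"
    by (rule norm_triangle_ineq4)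
  also have "\<dots> \<le> (\<Sum>j=Suc k..N. norm (a j)) + norm (a k)"
    unfolding tail_sum_def by (simp add: norm_sum)
  also have "\<dots> = (\<Sum>j=k..N. norm (a j))" using assms by (subst (2) sum.atLeast_Suc_atMost) auto
  finally show ?thesis .
qed

lemma haar_energy_le_weighted_sum:
  assumes q: "q \<ge> 1"
  shows "haar_energy q a N \<le> (1 / (1 - 2 powr (-1 / q))) powr q * (\<Sum>k\<le>N. 2 ^ k * norm (a k) powr q)"
proof -
  define \<rho> :: real where "\<rho> = 2 powr (-1 / q)"
  have \<rho>: "0 < \<rho>" "\<rho> < 1" using q by (auto simp: \<rho>_def intro: powr_less_one)
  have \<rho>q: "(\<rho> ^ k) powr q = 1 / 2 ^ k" for k
    unfolding \<rho>_def using q by (intro power_two_powr_inverse_powr) auto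
  define z where "z j = norm (a j) / \<rho> ^ j" for j
  have z: "0 \<le> z j" "z j powr q = 2 ^ j * norm (a j) powr q" for j
    using \<rho> by (simp_all add: z_def powr_divide \<rho>q)
  define Y where "Y k = (\<Sum>j=k..N. norm (a j))" for k
  have Y: "2 ^ k * Y k powr q = (\<Sum>j\<le>N. geom_kernel \<rho> j k * z j) powr q" for k
  proof -
    have "Y k = \<rho> ^ k * (\<Sum>j=k..N. \<rho> ^ (j - k) * z j)"
      unfolding Y_def sum_distrib_left using \<rho>
      by (intro sum.cong) (auto simp: z_def mult.assoc[symmetric] power_add[symmetric])
    then have "Y k powr q = 1 / 2 ^ k * (\<Sum>j=k..N. \<rho> ^ (j - k) * z j) powr q"
      using \<rho> z by (simp add: powr_mult \<rho>q sum_nonneg)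
    then show ?thesis by (simp add: sum_geom_kernel_transpose_eq)
  qed
  have "haar_energy q a N \<le> Y 0 powr q / 2 + (\<Sum>k\<le>N. 2 ^ k / 2 * Y k powr q)"
    unfolding haar_energy_def Y_def tail_sum_def
    using norm_tail_sum_diff_le[of _ N a, unfolded tail_sum_def] q
    by (intro add_mono divide_right_mono mult_left_mono sum_mono powr_mono2) (auto simp: norm_sum)
  also have "\<dots> \<le> (\<Sum>k\<le>N. 2 ^ k * Y k powr q)"
    using member_le_sum[of 0 "{..N}" "\<lambda>k. 2 ^ k / 2 * Y k powr q"]
    by (simp add: sum_divide_distrib[symmetric])
  also have "\<dots> = (\<Sum>k\<le>N. (\<Sum>j\<le>N. geom_kernel \<rho> j k * z j) powr q)"
    by (simp add: Y)
  also have "\<dots> \<le> (1 / (1 - \<rho>)) powr q * (\<Sum>j\<le>N. z j powr q)"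
    using \<rho> q z by (intro geom_kernel_transpose_powr_le) auto
  finally show ?thesis by (simp add: \<rho>_def z)
qed

lemma norm_tail_sum_Suc_le:
  assumes "k \<le> N"
  shows "norm (tail_sum a N (Suc k)) \<le> (norm (tail_sum a N k) + norm (tail_sum a N (Suc k) - a k)) / 2"
    and "norm (a k) \<le> (norm (tail_sum a N k) + norm (tail_sum a N (Suc k) - a k)) / 2"
proof -
  define T where "T = tail_sum a N"
  have "T k = a k + T (Suc k)" using assms by (simp add: T_def tail_sum_eq_Suc)
  then have "2 * T (Suc k) = T k + (T (Suc k) - a k)" "2 * a k = T k - (T (Suc k) - a k)"
    by (simp_all add: algebra_simps)
  then have "2 * norm (T (Suc k)) \<le> norm (T k) + norm (T (Suc k) - a k)"
    "2 * norm (a k) \<le> norm (T k) + norm (T (Suc k) - a k)"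
    by (metis norm_mult norm_numeral norm_triangle_ineq norm_triangle_ineq4)+
  then show "norm (T (Suc k)) \<le> (norm (T k) + norm (T (Suc k) - a k)) / 2"
    "norm (a k) \<le> (norm (T k) + norm (T (Suc k) - a k)) / 2"
    by simp_all
qed

lemma geometric_recurrence_le:
  fixes u w x :: "nat \<Rightarrow> real"
  assumes R: "0 \<le> R" and base: "u 0 + w 0 \<le> x 0"
    and step: "\<And>k. k < N \<Longrightarrow> u (Suc k) \<le> R * (u k + w k)"
    and w: "\<And>k. k < N \<Longrightarrow> w (Suc k) \<le> x (Suc k)"
    and k: "k \<le> N"
  shows "u k + w k \<le> (\<Sum>i\<le>k. R ^ (k - i) * x i)"
  using k
proof (induction k)
  case 0
  then show ?case using base by simp
next
  case (Suc k)
  then have k: "k < N" by simp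
  have "u (Suc k) + w (Suc k) \<le> R * (u k + w k) + x (Suc k)"
    using step[OF k] w[OF k] by linarith
  also have "\<dots> \<le> R * (\<Sum>i\<le>k. R ^ (k - i) * x i) + x (Suc k)"
    using Suc.IH k R by (intro add_right_mono mult_left_mono) auto
  also have "\<dots> = (\<Sum>i\<le>Suc k. R ^ (Suc k - i) * x i)"
    by (simp add: sum_distrib_left mult.assoc[symmetric] Suc_diff_le
        power_Suc[symmetric] del: power_Suc)
  finally show ?case .
qed

lemma weighted_sum_le_haar_energy:
  assumes q: "q > 1"
  shows "(\<Sum>k\<le>N. 2 ^ k * norm (a k) powr q) \<le> 2 * (1 / (1 - 2 powr (1 / q - 1))) powr q * haar_energy q a N"
proof -
  define \<rho> :: real where "\<rho> = 2 powr (-1 / q)"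
  define R :: real where "R = 2 powr (1 / q - 1)"
  have \<rho>: "0 < \<rho>" using q by (simp add: \<rho>_def)
  have R: "0 < R" "R < 1" using q by (auto simp: R_def intro: powr_less_one)
  have \<rho>q: "(\<rho> ^ k) powr q = 1 / 2 ^ k" for k
    unfolding \<rho>_def using q by (intro power_two_powr_inverse_powr) auto
  have R_eq: "R = 1 / (2 * \<rho>)"
  proof -
    have "2 * \<rho> * R = 2 powr 1 * 2 powr (-1 / q) * 2 powr (1 / q - 1)"
      by (simp add: \<rho>_def R_def)
    also have "\<dots> = 2 powr (1 + -1 / q + (1 / q - 1))"
      by (simp only: powr_add)
    finally show ?thesis using \<rho> by (simp add: field_simps)
  qed
  define T where "T = tail_sum a N"
  define u where "u k = norm (T k) / \<rho> ^ k" for k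
  define w where "w k = norm (T (Suc k) - a k) / \<rho> ^ k" for k
  define x where "x i = w i + (if i = 0 then norm (T 0) else 0)" for i
  have w: "0 \<le> w k" "w k powr q = 2 ^ k * norm (T (Suc k) - a k) powr q" for k
    using \<rho> by (simp_all add: w_def powr_divide \<rho>q)
  have x: "0 \<le> x i" for i using w by (simp add: x_def)
  have uw_le: "u k + w k \<le> (\<Sum>i\<le>N. geom_kernel R k i * x i)" if "k \<le> N" for k
  proof -
    have "u (Suc k) \<le> R * (u k + w k)" if "k < N" for k
    proof -
      have "u (Suc k) \<le> (norm (T k) + norm (T (Suc k) - a k)) / 2 / \<rho> ^ Suc k"
        unfolding u_def T_def using norm_tail_sum_Suc_le(1)[of k N a] that \<rho>
        by (intro divide_right_mono) auto
      also have "\<dots> = R * (u k + w k)"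
        unfolding R_eq using \<rho> by (simp add: u_def w_def field_simps)
      finally show ?thesis .
    qed
    then show ?thesis
      using geometric_recurrence_le[of R u w x N k] R that
      by (simp add: sum_geom_kernel_eq u_def x_def)
  qed
  have x_sum: "(\<Sum>i\<le>N. x i powr q) \<le> 2 powr q * (2 * haar_energy q a N)"
  proof -
    have "(\<Sum>i\<le>N. x i powr q) \<le> 2 powr q * ((\<Sum>i\<le>N. w i powr q) + norm (T 0) powr q)"
      unfolding x_def using w q by (intro sum_powr_add_at_zero_le) auto
    also have "(\<Sum>i\<le>N. w i powr q) + norm (T 0) powr q = 2 * haar_energy q a N"
      by (simp add: w haar_energy_def T_def sum_distrib_left)
    finally show ?thesis .
  qed
  have "(\<Sum>k\<le>N. 2 ^ k * norm (a k) powr q) \<le> (\<Sum>k\<le>N. ((\<Sum>i\<le>N. geom_kernel R k i * x i) / 2) powr q)"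
  proof (rule sum_mono)
    fix k assume "k \<in> {..N}"
    then have "norm (a k) / \<rho> ^ k \<le> (\<Sum>i\<le>N. geom_kernel R k i * x i) / 2"
      using norm_tail_sum_Suc_le(2)[of k N a] uw_le[of k] \<rho> by (auto simp: u_def w_def T_def field_simps)
    then have "(norm (a k) / \<rho> ^ k) powr q \<le> ((\<Sum>i\<le>N. geom_kernel R k i * x i) / 2) powr q"
      using q \<rho> by (intro powr_mono2) auto
    then show "2 ^ k * norm (a k) powr q \<le> ((\<Sum>i\<le>N. geom_kernel R k i * x i) / 2) powr q"
      using \<rho> by (simp add: powr_divide \<rho>q mult.commute)
  qed
  also have "\<dots> = (\<Sum>k\<le>N. (\<Sum>i\<le>N. geom_kernel R k i * x i) powr q / 2 powr q)"
    using x R by (intro sum.cong) (auto simp: powr_divide sum_nonneg geom_kernel_nonneg)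
  also have "\<dots> = (\<Sum>k\<le>N. (\<Sum>i\<le>N. geom_kernel R k i * x i) powr q) / 2 powr q"
    by (rule sum_divide_distrib[symmetric])
  also have "\<dots> \<le> (1 / (1 - R)) powr q * (\<Sum>i\<le>N. x i powr q) / 2 powr q"
    using R q x by (intro divide_right_mono geom_kernel_powr_le) auto
  also have "\<dots> \<le> (1 / (1 - R)) powr q * (2 powr q * (2 * haar_energy q a N)) / 2 powr q"
    using x_sum by (intro divide_right_mono mult_left_mono) auto
  finally show ?thesis by (simp add: R_def)
qed

lemma A_plus_two_powr_iff:
  assumes q: "q \<noteq> 0" and pq: "1 / p + 1 / q = 1"
  shows "A_plus q (2 powr (-1 / p)) d \<longleftrightarrow> summable (\<lambda>k. 2 ^ k * norm (d k / 2 ^ k) powr q)"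
proof -
  have qp: "q / p = q - 1" using pq q by (simp add: field_simps)
  have "real k * (-1 / p) * q = real k - real k * q" for k
  proof -
    have "real k * (-1 / p) * q = - real k * (q / p)" by simp
    then show ?thesis by (simp add: qp algebra_simps)
  qed
  then have e: "((2 powr (-1 / p)) ^ k) powr q = 2 powr real k / 2 powr (real k * q)" for k
    by (simp add: powr_power powr_powr powr_diff)
  have "norm (d k * of_real ((2 powr (-1 / p)) ^ k)) powr q = norm (d k) powr q * ((2 powr (-1 / p)) ^ k) powr q" for k
    by (simp add: norm_mult norm_power powr_mult)
  also have "\<dots> k = 2 ^ k * norm (d k / 2 ^ k) powr q" for k
    unfolding e by (simp add: norm_divide norm_power powr_divide powr_realpow[symmetric] powr_powr)
  finally have "norm (d k * of_real ((2 powr (-1 / p)) ^ k)) powr q = 2 ^ k * norm (d k / 2 ^ k) powr q" for k .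
  then show ?thesis unfolding A_plus_def by simp
qed

lemma summable_weighted_iff_haar_energy_bounded:
  assumes q: "q > 1"
  shows "summable (\<lambda>k. 2 ^ k * norm (a k) powr q) \<longleftrightarrow> (\<exists>C. \<forall>N. haar_energy q a N \<le> C)"
proof
  assume summable: "summable (\<lambda>k. 2 ^ k * norm (a k) powr q)"
  define B where "B = (1 / (1 - 2 powr (-1 / q))) powr q"
  have "haar_energy q a N \<le> B * (\<Sum>k. 2 ^ k * norm (a k) powr q)" for N
  proof -
    have "haar_energy q a N \<le> B * (\<Sum>k\<le>N. 2 ^ k * norm (a k) powr q)"
      unfolding B_def using q by (intro haar_energy_le_weighted_sum) simp
    also have "\<dots> \<le> B * (\<Sum>k. 2 ^ k * norm (a k) powr q)"
      using summable by (intro mult_left_mono sum_le_suminf) (auto simp: B_def)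
    finally show ?thesis .
  qed
  then show "\<exists>C. \<forall>N. haar_energy q a N \<le> C" by blast
next
  assume "\<exists>C. \<forall>N. haar_energy q a N \<le> C"
  then obtain C where C: "\<And>N. haar_energy q a N \<le> C" by blast
  define B where "B = 2 * (1 / (1 - 2 powr (1 / q - 1))) powr q"
  show "summable (\<lambda>k. 2 ^ k * norm (a k) powr q)"
  proof (rule summableI_nonneg_bounded)
    fix n
    have "(\<Sum>k<n. 2 ^ k * norm (a k) powr q) \<le> (\<Sum>k\<le>n. 2 ^ k * norm (a k) powr q)"
      by (intro sum_mono2) auto
    also have "\<dots> \<le> B * haar_energy q a n"
      unfolding B_def using q by (rule weighted_sum_le_haar_energy)
    also have "\<dots> \<le> B * C" using C by (intro mult_left_mono) (auto simp: B_def)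
    finally show "(\<Sum>k<n. 2 ^ k * norm (a k) powr q) \<le> B * C" .
  qed simp
qed

lemma level_eqI:
  assumes "2 ^ k \<le> n" "n < 2 ^ Suc k"
  shows "level n = k"
  unfolding level_def
proof (rule Greatest_equality)
  fix i assume "2 ^ i \<le> n"
  then have "(2::nat) ^ i < 2 ^ Suc k" using assms by linarith
  then have "i < Suc k" by (rule power_less_imp_less_exp[rotated]) simp
  then show "i \<le> k" by simp
qed fact

lemma two_power_le_imp_le: "2 ^ k \<le> (n::nat) \<Longrightarrow> k \<le> n"
  using less_exp[of k] by linarith

lemma level_bounds:
  assumes "n \<ge> 1"
  shows "2 ^ level n \<le> n" "n < 2 ^ Suc (level n)"
proof -
  have "(2::nat) ^ 0 \<le> n" using assms by simp
  then show "2 ^ level n \<le> n" unfolding level_def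
    by (rule GreatestI_nat[OF _ two_power_le_imp_le])
  show "n < 2 ^ Suc (level n)"
  proof (rule ccontr)
    assume "\<not> n < 2 ^ Suc (level n)"
    then have "2 ^ Suc (level n) \<le> n" by simp
    then have "Suc (level n) \<le> level n" unfolding level_def
      by (rule Greatest_le_nat[OF _ two_power_le_imp_le])
    then show False by simp
  qed
qed

lemma pos_less: "n \<ge> 1 \<Longrightarrow> pos n < 2 ^ level n"
  using level_bounds[of n] by (simp add: pos_def)

lemma level_power [simp]: "level (2 ^ k) = k"
  by (rule level_eqI) auto

lemma pos_power [simp]: "pos (2 ^ k) = 0"
  by (simp add: pos_def)

lemma nu_dvd:
  assumes "n \<ge> 1"
  shows "2 ^ nu n dvd n"
proof -
  have bound: "k \<le> n" if "2 ^ k dvd n" for k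
  proof -
    have "2 ^ k \<le> n" using dvd_imp_le[OF that] assms by simp
    then show ?thesis by (rule two_power_le_imp_le)
  qed
  show ?thesis unfolding nu_def by (rule GreatestI_nat[where k=0, OF _ bound]) simp_all
qed

lemma nu_power [simp]: "nu (2 ^ k) = k"
  unfolding nu_def
  by (rule Greatest_equality) (auto simp: power_dvd_imp_le)

lemma power_dvd_of_le_nu: "n \<ge> 1 \<Longrightarrow> j \<le> nu n \<Longrightarrow> 2 ^ j dvd n"
  by (meson dvd_trans le_imp_power_dvd nu_dvd)

lemma nu_le_level: "n \<ge> 1 \<Longrightarrow> nu n \<le> level n"
proof -
  assume n: "n \<ge> 1"
  have "2 ^ nu n \<le> n" using nu_dvd[OF n] n by (simp add: dvd_imp_le)
  then have "(2::nat) ^ nu n < 2 ^ Suc (level n)" using level_bounds(2)[OF n] by linarith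
  then have "nu n < Suc (level n)" by (rule power_less_imp_less_exp[rotated]) simp
  then show ?thesis by simp
qed

lemma level_pos_div_power:
  assumes n: "n \<ge> 1" and j: "j \<le> nu n"
  shows "level (n div 2 ^ j) = level n - j" "real (pos (n div 2 ^ j)) = real (pos n) / 2 ^ j"
proof -
  define m where "m = level n"
  define x where "x = n div 2 ^ j"
  have jm: "j \<le> m" using nu_le_level[OF n] j by (simp add: m_def)
  have nx: "n = 2 ^ j * x" using power_dvd_of_le_nu[OF n j] by (simp add: x_def)
  have m_split: "(2::nat) ^ m = 2 ^ j * 2 ^ (m - j)" "(2::real) ^ m = 2 ^ j * 2 ^ (m - j)"
    using jm by (simp_all flip: power_add)
  have x_low: "2 ^ (m - j) \<le> x"
    using level_bounds(1)[OF n, folded m_def] by (simp add: nx m_split)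
  have x_high: "x < 2 ^ Suc (m - j)"
    using level_bounds(2)[OF n, folded m_def] by (simp add: nx m_split)
  have level_x: "level x = m - j" by (rule level_eqI[OF x_low x_high])
  then show "level (n div 2 ^ j) = level n - j" by (simp add: x_def m_def)
  have "real (pos x) = real x - 2 ^ (m - j)"
    unfolding pos_def level_x using x_low by (simp add: of_nat_diff)
  also have "\<dots> = (real n - 2 ^ m) / 2 ^ j"
    unfolding m_split(2) nx by (simp add: field_simps)
  also have "\<dots> = real (pos n) / 2 ^ j"
    using level_bounds(1)[OF n] by (simp add: pos_def m_def of_nat_diff)
  finally show "real (pos (n div 2 ^ j)) = real (pos n) / 2 ^ j" by (simp add: x_def)
qed

lemma dil_eq:
  "dil u n t = (let s = 2 ^ level n * t - real (pos n) in if 0 < s \<and> s \<le> 1 then u s else 0)"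
proof -
  have p: "(0::real) < 2 ^ level n" by simp
  have "(real (pos n) / 2 ^ level n < t) = (0 < 2 ^ level n * t - real (pos n))"
    "(t \<le> (real (pos n) + 1) / 2 ^ level n) = (2 ^ level n * t - real (pos n) \<le> 1)"
    using p by (simp_all add: field_simps)
  then show ?thesis unfolding dil_def Let_def by simp
qed

lemma dil_dyadic_rescale:
  "dil u n ((real (pos n) + s) / 2 ^ level n) = (if 0 < s \<and> s \<le> 1 then u s else 0)"
  by (simp add: dil_eq)

lemma dil_nonzero_imp:
  assumes n: "n \<ge> 1" and nonzero: "dil u n t \<noteq> 0"
  shows "0 < t \<and> t \<le> 1"
proof -
  have t: "real (pos n) / 2 ^ level n < t" "t \<le> (real (pos n) + 1) / 2 ^ level n"
    using nonzero unfolding dil_def by (auto split: if_splits)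
  have "real (pos n + 1) \<le> real ((2::nat) ^ level n)"
    using pos_less[OF n] by (simp only: of_nat_le_iff Suc_eq_plus1[symmetric] Suc_le_eq)
  then have "(real (pos n) + 1) / 2 ^ level n \<le> 1" by simp
  moreover have "0 \<le> real (pos n) / 2 ^ level n" by simp
  ultimately show ?thesis using t by linarith
qed

lemma haar_fn_eq: "haar_fn n t = haar (2 ^ level n * t - real (pos n))"
  unfolding haar_fn_def dil_eq Let_def by (simp add: haar_def)

lemma haar_fn_div_power_dyadic_rescale:
  assumes n: "n \<ge> 1" and j: "j \<le> nu n"
  shows "haar_fn (n div 2 ^ j) ((real (pos n) + s) / 2 ^ level n) = haar (s / 2 ^ j)"
proof -
  have "(2::real) ^ (level n - j) = 2 ^ level n / 2 ^ j"
    using nu_le_level[OF n] j by (simp add: power_diff)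
  then show ?thesis
    unfolding haar_fn_eq level_pos_div_power[OF n j] by (simp add: field_simps)
qed

definition haar_profile :: "(nat \<Rightarrow> complex) \<Rightarrow> nat \<Rightarrow> real \<Rightarrow> complex" where
  "haar_profile a N s = (\<Sum>j\<le>N. a j * haar (s / 2 ^ j))"

lemma haar_divide_power_eq_one: "0 < s \<Longrightarrow> s \<le> 2 ^ j / 2 \<Longrightarrow> haar (s / 2 ^ j) = 1"
  by (simp add: haar_def field_simps)

lemma haar_divide_power_eq_minus_one: "2 ^ j / 2 < s \<Longrightarrow> s \<le> 2 ^ j \<Longrightarrow> haar (s / 2 ^ j) = -1"
  by (simp add: haar_def field_simps)

lemma haar_divide_power_eq_zero: "s \<le> 0 \<or> 2 ^ j < s \<Longrightarrow> haar (s / 2 ^ j) = 0"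
  by (auto simp: haar_def field_simps)

lemma two_power_le_half_two_power: "j < k \<Longrightarrow> (2::real) ^ j \<le> 2 ^ k / 2"
  using power_increasing[of "Suc j" k "2::real"] by simp

lemma haar_profile_initial:
  assumes "0 < s" "s \<le> 1/2"
  shows "haar_profile a N s = tail_sum a N 0"
proof -
  have "haar (s / 2 ^ j) = 1" for j
  proof -
    have "(1::real) \<le> 2 ^ j" by simp
    then show ?thesis using assms by (intro haar_divide_power_eq_one) linarith+
  qed
  then show ?thesis by (simp add: haar_profile_def tail_sum_def atLeast0AtMost)
qed

lemma haar_profile_block:
  assumes k: "k \<le> N" and s: "2 ^ k / 2 < s" "s \<le> 2 ^ k"
  shows "haar_profile a N s = tail_sum a N (Suc k) - a k"
proof -
  have "haar (s / 2 ^ j) = (if k < j then 1 else if j = k then -1 else 0)" for j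
  proof (cases j k rule: linorder_cases)
    case less
    then show ?thesis using s two_power_le_half_two_power[OF less] by (simp add: haar_divide_power_eq_zero)
  next
    case equal
    then show ?thesis using s by (simp add: haar_divide_power_eq_minus_one)
  next
    case greater
    have "0 < s" using s(1) by (smt (verit) zero_less_power divide_pos_pos)
    then show ?thesis using greater s two_power_le_half_two_power[OF greater]
      by (simp add: haar_divide_power_eq_one)
  qed
  then have "haar_profile a N s = (\<Sum>j\<le>N. (if k < j then a j else 0) - (if j = k then a j else 0))"
    unfolding haar_profile_def by (intro sum.cong) auto
  also have "\<dots> = (\<Sum>j=Suc k..N. a j) - a k"
  proof -
    have "{j. j \<le> N \<and> k < j} = {Suc k..N}" by auto
    then show ?thesis using k by (simp add: sum_subtractf sum.inter_filter[symmetric])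
  qed
  finally show ?thesis by (simp add: tail_sum_def)
qed

lemma haar_profile_outside:
  assumes "\<not> (0 < s \<and> s \<le> 2 ^ N)"
  shows "haar_profile a N s = 0"
proof -
  have "haar (s / 2 ^ j) = 0" if "j \<le> N" for j
  proof -
    have "(2::real) ^ j \<le> 2 ^ N" using that by (intro power_increasing) auto
    then show ?thesis using assms by (intro haar_divide_power_eq_zero) linarith
  qed
  then show ?thesis by (simp add: haar_profile_def)
qed

lemma dyadic_block_cases:
  "0 < s \<Longrightarrow> s \<le> 2 ^ N \<Longrightarrow> s \<le> 1/2 \<or> (\<exists>k\<le>N. 2 ^ k / 2 < s \<and> s \<le> (2::real) ^ k)"
proof (induction N)
  case 0
  then show ?case by (cases "s \<le> 1/2") auto
next
  case (Suc N)
  show ?case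
  proof (cases "s \<le> 2 ^ N")
    case True
    then show ?thesis using Suc by (meson le_Suc_eq)
  next
    case False
    then show ?thesis using Suc.prems by (intro disjI2 exI[of _ "Suc N"]) auto
  qed
qed

lemma indicator_dyadic_block:
  fixes s :: real
  assumes "2 ^ k / 2 < s" "s \<le> 2 ^ k"
  shows "indicator {2 ^ i / 2<..2 ^ i} s = (if i = k then 1 else 0 :: real)"
proof (cases i k rule: linorder_cases)
  case less
  then show ?thesis using assms two_power_le_half_two_power[OF less] by (simp add: indicator_def)
next
  case greater
  then show ?thesis using assms two_power_le_half_two_power[OF greater] by (simp add: indicator_def)
qed (use assms in simp)

lemma norm_haar_profile_powr:
  fixes s :: real
  shows "norm (haar_profile a N s) powr q = indicator {0<..1/2} s * norm (tail_sum a N 0) powr q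
     + (\<Sum>k\<le>N. indicator {2 ^ k / 2<..2 ^ k} s * norm (tail_sum a N (Suc k) - a k) powr q)"
proof (cases "0 < s \<and> s \<le> 2 ^ N")
  case False
  have "indicator {2 ^ k / 2<..2 ^ k} s = (0::real)" if "k \<le> N" for k
  proof -
    have "(2::real) ^ k \<le> 2 ^ N" "0 < (2::real) ^ k" using that by (auto intro: power_increasing)
    then have "s \<notin> {2 ^ k / 2<..2 ^ k}" using False by (simp only: greaterThanAtMost_iff) linarith
    then show ?thesis by simp
  qed
  moreover have "indicator {0<..1/2} s = (0::real)"
  proof -
    have "(1::real) \<le> 2 ^ N" by simp
    then have "s \<notin> {0<..1/2}" using False by (simp only: greaterThanAtMost_iff) linarith
    then show ?thesis by simp
  qed
  ultimately show ?thesis using False by (simp add: haar_profile_outside)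
next
  case True
  then consider "0 < s" "s \<le> 1/2" | k where "k \<le> N" "2 ^ k / 2 < s" "s \<le> (2::real) ^ k"
    using dyadic_block_cases[of s N] by blast
  then show ?thesis
  proof cases
    case 1
    note s = this
    have "indicator {2 ^ k / 2<..2 ^ k} s = (0::real)" for k
    proof -
      have "(1::real) \<le> 2 ^ k" by simp
      then have "s \<notin> {2 ^ k / 2<..2 ^ k}" using s by (simp only: greaterThanAtMost_iff) linarith
      then show ?thesis by simp
    qed
    then show ?thesis using s by (simp add: haar_profile_initial)
  next
    case (2 k)
    note k = this
    have "indicator {0<..1/2} s = (0::real)"
    proof -
      have "(1::real) \<le> 2 ^ k" by simp
      then have "s \<notin> {0<..1/2}" using k by (simp only: greaterThanAtMost_iff) linarith
      then show ?thesis by simp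
    qed
    moreover have "(\<Sum>i\<le>N. indicator {2 ^ i / 2<..2 ^ i} s * norm (tail_sum a N (Suc i) - a i) powr q)
        = (\<Sum>i\<le>N. if i = k then norm (tail_sum a N (Suc i) - a i) powr q else 0)"
      by (intro sum.cong) (simp_all add: indicator_dyadic_block[OF k(2,3)])
    ultimately show ?thesis using k by (simp add: haar_profile_block)
  qed
qed

lemma integrable_indicator_Ioc_mult:
  "u \<le> v \<Longrightarrow> integrable lborel (\<lambda>s::real. indicator {u<..v} s * (c::real))"
  by (intro integrable_mult_left) (simp add: integrable_indicator_iff)

lemma integral_norm_haar_profile_powr:
  "(\<integral>s. norm (haar_profile a N s) powr q \<partial>lborel) = haar_energy q a N"
proof -
  define X where "X k = norm (tail_sum a N (Suc k) - a k) powr q" for k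
  define Y where "Y = norm (tail_sum a N 0) powr q"
  have "(\<integral>s. norm (haar_profile a N s) powr q \<partial>lborel)
      = (\<integral>s. indicator {0<..1/2} (s::real) * Y + (\<Sum>k\<le>N. indicator {2 ^ k / 2<..2 ^ k} s * X k) \<partial>lborel)"
    unfolding X_def Y_def by (simp only: norm_haar_profile_powr)
  also have "\<dots> = (\<integral>s. indicator {0<..1/2} (s::real) * Y \<partial>lborel)
      + (\<Sum>k\<le>N. \<integral>s. indicator {2 ^ k / 2<..2 ^ k} (s::real) * X k \<partial>lborel)"
  proof -
    have block_integrable: "integrable lborel (\<lambda>s::real. indicator {2 ^ k / 2<..2 ^ k} s * X k)" for k
      by (rule integrable_indicator_Ioc_mult) simp
    show ?thesis
      by (simp only: Bochner_Integration.integral_add[OF integrable_indicator_Ioc_mult Bochner_Integration.integrable_sum]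
          Bochner_Integration.integral_sum[OF block_integrable] block_integrable)
  qed
  also have "\<dots> = haar_energy q a N"
    by (simp add: haar_energy_def X_def Y_def)
  finally show ?thesis .
qed

lemma set_integral_norm_powr_rescale:
  fixes u :: "real \<Rightarrow> complex"
  assumes supp: "\<And>t. u t \<noteq> 0 \<Longrightarrow> 0 < t \<and> t \<le> 1"
  shows "set_lebesgue_integral lborel {0<..1} (\<lambda>t. norm (u t) powr q)
    = (\<integral>s. norm (u ((b + s) / 2 ^ m)) powr q \<partial>lborel) / 2 ^ m"
proof -
  have "set_lebesgue_integral lborel {0<..1} (\<lambda>t. norm (u t) powr q) = (\<integral>t. norm (u t) powr q \<partial>lborel)"
    unfolding set_lebesgue_integral_def
    by (rule Bochner_Integration.integral_cong) (auto simp: indicator_def dest: supp)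
  also have "\<dots> = (\<integral>s. norm (u (b / 2 ^ m + 1 / 2 ^ m * s)) powr q \<partial>lborel) / 2 ^ m"
    using lborel_integral_real_affine[of "1 / 2 ^ m" "\<lambda>t. norm (u t) powr q" "b / 2 ^ m"] by simp
  finally show ?thesis by (simp add: add_divide_distrib)
qed

lemma Lpnorm_dil:
  assumes n: "n \<ge> 1"
  shows "Lpnorm q (dil u n) = (set_lebesgue_integral lborel {0<..1} (\<lambda>t. norm (u t) powr q) / 2 ^ level n) powr (1 / q)"
proof -
  have "set_lebesgue_integral lborel {0<..1} (\<lambda>t. norm (dil u n t) powr q)
      = (\<integral>s. norm (dil u n ((real (pos n) + s) / 2 ^ level n)) powr q \<partial>lborel) / 2 ^ level n"
    using dil_nonzero_imp[OF n] by (rule set_integral_norm_powr_rescale)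
  also have "(\<integral>s. norm (dil u n ((real (pos n) + s) / 2 ^ level n)) powr q \<partial>lborel)
      = set_lebesgue_integral lborel {0<..1} (\<lambda>t. norm (u t) powr q)"
    unfolding set_lebesgue_integral_def dil_dyadic_rescale
    by (rule Bochner_Integration.integral_cong) (auto simp: indicator_def)
  finally show ?thesis unfolding Lpnorm_def by simp
qed

lemma gdual_nonzero_imp:
  assumes n: "n \<ge> 1" and "gdual c n t \<noteq> 0"
  shows "0 < t \<and> t \<le> 1"
proof -
  obtain j where j: "j \<le> nu n" and "haar_fn (n div 2 ^ j) t \<noteq> 0"
    using assms(2) unfolding gdual_def by (metis (no_types, lifting) atLeastAtMost_iff mult_zero_right sum.neutral)
  moreover have "n div 2 ^ j \<ge> 1"
    using power_dvd_of_le_nu[OF n j] n by (auto simp: Suc_le_eq div_greater_zero_iff dvd_imp_le)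
  ultimately show ?thesis unfolding haar_fn_def using dil_nonzero_imp by blast
qed

lemma gdual_dyadic_rescale:
  assumes n: "n \<ge> 1"
  shows "gdual c n ((real (pos n) + s) / 2 ^ level n)
    = 2 ^ level n * haar_profile (\<lambda>j. inv_coeffs c j / 2 ^ j) (nu n) s"
  unfolding gdual_def haar_profile_def sum_distrib_left atLeast0AtMost
proof (rule sum.cong)
  fix j assume "j \<in> {..nu n}"
  then have j: "j \<le> nu n" by simp
  have "(2::complex) ^ (level n - j) = 2 ^ level n / 2 ^ j"
    using nu_le_level[OF n] j by (simp add: power_diff)
  then show "inv_coeffs c j * 2 ^ (level n - j) * haar_fn (n div 2 ^ j) ((real (pos n) + s) / 2 ^ level n)
      = 2 ^ level n * (inv_coeffs c j / 2 ^ j * haar (s / 2 ^ j))"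
    by (simp add: haar_fn_div_power_dyadic_rescale[OF n j])
qed simp

lemma Lpnorm_gdual:
  assumes n: "n \<ge> 1"
  shows "Lpnorm q (gdual c n)
    = ((2 ^ level n) powr q * haar_energy q (\<lambda>j. inv_coeffs c j / 2 ^ j) (nu n) / 2 ^ level n) powr (1 / q)"
proof -
  have "set_lebesgue_integral lborel {0<..1} (\<lambda>t. norm (gdual c n t) powr q)
      = (\<integral>s. norm (gdual c n ((real (pos n) + s) / 2 ^ level n)) powr q \<partial>lborel) / 2 ^ level n"
    using gdual_nonzero_imp[OF n] by (rule set_integral_norm_powr_rescale)
  also have "(\<integral>s. norm (gdual c n ((real (pos n) + s) / 2 ^ level n)) powr q \<partial>lborel)
      = (2 ^ level n) powr q * haar_energy q (\<lambda>j. inv_coeffs c j / 2 ^ j) (nu n)"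
    by (simp add: gdual_dyadic_rescale[OF n] norm_mult norm_power powr_mult
        integral_norm_haar_profile_powr)
  finally show ?thesis unfolding Lpnorm_def by simp
qed

lemma chaos_eq_neg_first_coeff:
  assumes t: "1/2 < t" "t \<le> 1"
  shows "chaos c t = - c 0"
proof -
  have "c k * haar_fn (2 ^ k) t = (if k = 0 then - c 0 else 0)" for k
  proof -
    have haar_fn_k: "haar_fn (2 ^ k) t = haar (2 ^ k * t)" by (simp add: haar_fn_eq)
    show ?thesis
    proof (cases "k = 0")
      case True
      show ?thesis unfolding haar_fn_k using t True by (simp add: haar_def)
    next
      case False
      then have "(2::real) ^ 1 \<le> 2 ^ k" by (intro power_increasing) auto
      then have "(2::real) * t \<le> 2 ^ k * t" using t by (intro mult_right_mono) auto
      then have "1 < 2 ^ k * t" using t by linarith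
      then show ?thesis using False by (simp add: haar_fn_k haar_def)
    qed
  qed
  then have "chaos c t = (\<Sum>k. if k = 0 then - c 0 else 0)" unfolding chaos_def by simp
  also have "\<dots> = - c 0" using sums_unique[OF sums_single[of 0 "\<lambda>_. - c 0"]] by simp
  finally show ?thesis .
qed

lemma Lpnorm_chaos_pos:
  assumes c0: "c 0 \<noteq> 0" and p: "p > 0"
    and integrable: "set_integrable lborel {0<..1::real} (\<lambda>t. norm (chaos c t) powr p)"
  shows "Lpnorm p (chaos c) > 0"
proof -
  define C where "C = norm (c 0) powr p"
  have "0 < C / 2" using c0 by (simp add: C_def)
  also have "\<dots> = (\<integral>t. indicator {1/2<..1} (t::real) * C \<partial>lborel)" by simp
  also have "\<dots> \<le> set_lebesgue_integral lborel {0<..1} (\<lambda>t. norm (chaos c t) powr p)"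
    unfolding set_lebesgue_integral_def
  proof (rule integral_mono)
    show "integrable lborel (\<lambda>t. indicator {1/2<..1} (t::real) * C)"
      by (rule integrable_indicator_Ioc_mult) simp
    show "integrable lborel (\<lambda>t. indicator {0<..1} t *\<^sub>R norm (chaos c t) powr p)"
      using integrable by (simp add: set_integrable_def)
  qed (auto simp: indicator_def chaos_eq_neg_first_coeff C_def)
  finally show ?thesis unfolding Lpnorm_def by simp
qed

lemma Lpnorm_dil_mult_Lpnorm_gdual:
  assumes n: "n \<ge> 1" and pq: "1 / p + 1 / q = 1" and q: "q > 0"
  shows "Lpnorm p (dil u n) * Lpnorm q (gdual c n)
    = Lpnorm p u * haar_energy q (\<lambda>j. inv_coeffs c j / 2 ^ j) (nu n) powr (1 / q)"
proof -
  define K where "K = set_lebesgue_integral lborel {0<..1::real} (\<lambda>t. norm (u t) powr p)"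
  define E where "E = haar_energy q (\<lambda>j. inv_coeffs c j / 2 ^ j) (nu n)"
  define m :: real where "m = 2 ^ level n"
  have K: "K \<ge> 0" unfolding K_def set_lebesgue_integral_def
    by (rule Bochner_Integration.integral_nonneg) (simp add: indicator_def)
  have E: "E \<ge> 0" unfolding E_def by (rule haar_energy_nonneg)
  have m: "m > 0" by (simp add: m_def)
  have "Lpnorm p (dil u n) * Lpnorm q (gdual c n) = (K / m) powr (1 / p) * (m powr q * E / m) powr (1 / q)"
    unfolding Lpnorm_dil[OF n] Lpnorm_gdual[OF n] K_def E_def m_def ..
  also have "\<dots> = (m powr q) powr (1 / q) / m powr (1 / p + 1 / q) * K powr (1 / p) * E powr (1 / q)"
    using K E m by (simp add: powr_mult powr_divide powr_add)
  also have "\<dots> = K powr (1 / p) * E powr (1 / q)"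
    using m q pq by (simp add: powr_powr)
  finally show ?thesis by (simp add: Lpnorm_def K_def E_def)
qed

lemma bounded_iff_bounded_root_nu:
  fixes E :: "nat \<Rightarrow> real"
  assumes L: "L > 0" and q: "q > 0" and E: "\<And>N. E N \<ge> 0"
  shows "(\<exists>C. \<forall>N. E N \<le> C) \<longleftrightarrow> (\<exists>C. \<forall>n\<ge>1. L * E (nu n) powr (1 / q) \<le> C)"
proof
  assume "\<exists>C. \<forall>N. E N \<le> C"
  then obtain C where "\<And>N. E N \<le> C" by blast
  then have "L * E (nu n) powr (1 / q) \<le> L * C powr (1 / q)" for n
    using L q E by (intro mult_left_mono powr_mono2) auto
  then show "\<exists>C. \<forall>n\<ge>1. L * E (nu n) powr (1 / q) \<le> C" by blast
next
  assume "\<exists>C. \<forall>n\<ge>1. L * E (nu n) powr (1 / q) \<le> C"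
  then obtain C where C: "\<And>n. n \<ge> 1 \<Longrightarrow> L * E (nu n) powr (1 / q) \<le> C" by blast
  have "E N \<le> (C / L) powr q" for N
  proof -
    have "E N powr (1 / q) \<le> C / L"
      using C[of "2 ^ N"] L by (simp add: field_simps mult.commute)
    then have "(E N powr (1 / q)) powr q \<le> (C / L) powr q" using q by (intro powr_mono2) auto
    then show ?thesis using q E by (simp add: powr_powr)
  qed
  then show "\<exists>C. \<forall>N. E N \<le> C" by blast
qed

lemma conjugate_exponent_gt_one:
  fixes p q :: real
  assumes "1 < p" "1 / p + 1 / q = 1"
  shows "1 < q"
proof -
  have "1 / q = 1 - 1 / p" using assms(2) by simp
  moreover have "0 < 1 / p" "1 / p < 1" using assms(1) by auto
  ultimately have "0 < 1 / q" "1 / q < 1" by auto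
  then show ?thesis by (simp add: divide_less_eq zero_less_divide_1_iff)
qed

theorem lemma4:
  fixes p p' :: real and c :: "nat \<Rightarrow> complex"
  assumes "1 < p" and "1 / p + 1 / p' = 1"
    and "c 0 \<noteq> 0"
    and "set_integrable lborel {0<..1::real} (\<lambda>t. norm (chaos c t) powr p)"
  shows "A_plus p' (2 powr (- 1 / p)) (inv_coeffs c) \<longleftrightarrow>
         (\<exists>C. \<forall>n\<ge>1. Lpnorm p (dil (chaos c) n) * Lpnorm p' (gdual c n) \<le> C)"
proof -
  define a where "a j = inv_coeffs c j / 2 ^ j" for j
  have p': "p' > 1" using assms(1,2) by (rule conjugate_exponent_gt_one)
  have "A_plus p' (2 powr (- 1 / p)) (inv_coeffs c) \<longleftrightarrow> summable (\<lambda>k. 2 ^ k * norm (a k) powr p')"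
    unfolding a_def using p' assms(2) by (intro A_plus_two_powr_iff) auto
  also have "\<dots> \<longleftrightarrow> (\<exists>C. \<forall>N. haar_energy p' a N \<le> C)"
    using p' by (rule summable_weighted_iff_haar_energy_bounded)
  also have "\<dots> \<longleftrightarrow> (\<exists>C. \<forall>n\<ge>1. Lpnorm p (chaos c) * haar_energy p' a (nu n) powr (1 / p') \<le> C)"
    using Lpnorm_chaos_pos[OF assms(3) _ assms(4)] assms(1) p'
    by (intro bounded_iff_bounded_root_nu haar_energy_nonneg) auto
  also have "\<dots> \<longleftrightarrow> (\<exists>C. \<forall>n\<ge>1. Lpnorm p (dil (chaos c) n) * Lpnorm p' (gdual c n) \<le> C)"
    using Lpnorm_dil_mult_Lpnorm_gdual[OF _ assms(2), of _ "chaos c" c] p' unfolding a_def by simp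
  finally show ?thesis .
qed

end
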